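(* Every simply typable term of $\Lambda J$ (i.e. every $t\in\mathtt T_J$ such that $\Gamma\vdash t:A$ is derivable in the simple type system below for some $\Gamma$ and $A$) is strongly normalizing for $\to_{d\beta}$, i.e. $t\in SN_{d\beta}$.
   Context: Terms $\mathtt T_J$: $t,u,r ::= x \mid \lambda x.t \mid t(u,y.r)$ (generalized application; $y$ is bound in $r$), taken up to $\alpha$-equivalence; $\{u/x\}t$ is capture-avoiding substitution and $\mathrm{fv}(t)$ the free variables. List contexts: $\mathtt D ::= \Diamond \mid t(u,y.\mathtt D)$, with $\mathtt D\langle s\rangle$ the term obtained by replacing the hole by $s$. The distant beta rule is $\mathtt D\langle\lambda x.t\rangle(u,y.r) \mapsto_{d\beta} \{\{u/x\}\mathtt D\langle t\rangle/y\}r$ (by $\alpha$-conversion, variables bound by $\mathtt D$ are not free in $u$ and $x$ does not occur in $\mathtt D$), and $\to_{d\beta}$ is its closure under all term contexts. $SN_{d\beta}$ is the set of terms admitting no infinite $\to_{d\beta}$-sequence. Simple types $A,B,C ::= \alpha \mid A\to B$; contexts $\Gamma$ are finite maps from variables to simple types; rules: $\Gamma,x:A\vdash x:A$; from $\Gamma,x:A\vdash t:B$ infer $\Gamma\vdash\lambda x.t:A\to B$; from $\Gamma\vdash t:A\to B$, $\Gamma\vdash u:A$ and $\Gamma,y:B\vdash r:C$ infer $\Gamma\vdash t(u,y.r):C$. *)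

theory Defs
  imports Main
begin

text \<open>Terms of Lambda-J in de Bruijn representation (terms up to alpha-equivalence).
  JApp t u r is the generalized application t(u,y.r); r lives under one extra
  binder (index 0 = y).\<close>

datatype trm = Var nat | Lam trm | JApp trm trm trm

primrec lift :: "trm \<Rightarrow> nat \<Rightarrow> trm" where
  "lift (Var i) k = (if i < k then Var i else Var (Suc i))"
| "lift (Lam t) k = Lam (lift t (Suc k))"
| "lift (JApp t u r) k = JApp (lift t k) (lift u k) (lift r (Suc k))"

text \<open>subst t i s: capture-avoiding substitution of s for index i in t,
  decrementing the indices above i (the binder of i disappears).\<close>
primrec subst :: "trm \<Rightarrow> nat \<Rightarrow> trm \<Rightarrow> trm" where
  "subst (Var j) i s = (if j < i then Var j else if j = i then s else Var (j - 1))"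
| "subst (Lam t) i s = Lam (subst t (Suc i) (lift s 0))"
| "subst (JApp t u r) i s = JApp (subst t i s) (subst u i s) (subst r (Suc i) (lift s 0))"

datatype lctx = Hole | LApp trm trm lctx

primrec plug :: "lctx \<Rightarrow> trm \<Rightarrow> trm" where
  "plug Hole s = s"
| "plug (LApp t u D) s = JApp t u (plug D s)"

text \<open>Number of binders crossed by the hole of a list context.\<close>
primrec depth :: "lctx \<Rightarrow> nat" where
  "depth Hole = 0"
| "depth (LApp t u D) = Suc (depth D)"

text \<open>Distant beta: D<\<lambda>x.t>(u,y.r) \<mapsto> {{u/x}D<t>/y}r.  The argument u lives outside
  D, so it is lifted over the depth D binders of D.\<close>
inductive dbeta :: "trm \<Rightarrow> trm \<Rightarrow> bool" (infix "\<rightarrow>\<^sub>d\<^sub>\<beta>" 50) where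
  root: "JApp (plug D (Lam t)) u r \<rightarrow>\<^sub>d\<^sub>\<beta>
           subst r 0 (plug D (subst t 0 (((\<lambda>s. lift s 0) ^^ depth D) u)))"
| lam: "t \<rightarrow>\<^sub>d\<^sub>\<beta> t' \<Longrightarrow> Lam t \<rightarrow>\<^sub>d\<^sub>\<beta> Lam t'"
| app1: "t \<rightarrow>\<^sub>d\<^sub>\<beta> t' \<Longrightarrow> JApp t u r \<rightarrow>\<^sub>d\<^sub>\<beta> JApp t' u r"
| app2: "u \<rightarrow>\<^sub>d\<^sub>\<beta> u' \<Longrightarrow> JApp t u r \<rightarrow>\<^sub>d\<^sub>\<beta> JApp t u' r"
| app3: "r \<rightarrow>\<^sub>d\<^sub>\<beta> r' \<Longrightarrow> JApp t u r \<rightarrow>\<^sub>d\<^sub>\<beta> JApp t u r'"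

definition SN_dbeta :: "trm \<Rightarrow> bool" where
  "SN_dbeta t \<longleftrightarrow> \<not> (\<exists>f. f 0 = t \<and> (\<forall>n. f n \<rightarrow>\<^sub>d\<^sub>\<beta> f (Suc n)))"

datatype ty = Atom nat | Fun ty ty

definition shift_env :: "(nat \<Rightarrow> ty) \<Rightarrow> ty \<Rightarrow> nat \<Rightarrow> ty" where
  "shift_env \<Gamma> T = (\<lambda>i. if i = 0 then T else \<Gamma> (i - 1))"

inductive typing :: "(nat \<Rightarrow> ty) \<Rightarrow> trm \<Rightarrow> ty \<Rightarrow> bool" where
  tvar: "\<Gamma> x = A \<Longrightarrow> typing \<Gamma> (Var x) A"
| tlam: "typing (shift_env \<Gamma> A) t B \<Longrightarrow> typing \<Gamma> (Lam t) (Fun A B)"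
| tapp: "typing \<Gamma> t (Fun A B) \<Longrightarrow> typing \<Gamma> u A \<Longrightarrow> typing (shift_env \<Gamma> B) r C
         \<Longrightarrow> typing \<Gamma> (JApp t u r) C"

end

theory Submission
  imports Defs "HOL-Library.Multiset_Order"
begin

(* Tait-style reducibility, where Red (A -> B) is defined by elimination against the identity
   continuation y.y.  What is specific to distant beta is that the abstraction of a redex
   D<lambda x.t>(u,y.r) may lie in the continuation of an earlier generalized application, so
   redexes need not be visible at the head.  The key lemma is therefore about whole stacks
   t(u1,y1.r1)...(un,yn.rn) ending in an atomic type: if t is reducible (or an abstraction whose
   body maps reducible terms to reducible ones), every ui is reducible and every ri maps reducible
   terms to reducible ones, then the stack is strongly normalizing.  It is proved by induction on
   the multiset of sizes of the arrow types along the stack, inside an induction on strong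
   normalization of t and the ui, ri.  When the abstraction of a contracted redex lies in the
   continuation of the preceding frame, the contractum is shown reducible by closing the stack with
   identity frames, all of whose types are smaller than the arrow type the redex consumed. *)

section \<open>Substitution\<close>

abbreviation lifts :: "nat \<Rightarrow> trm \<Rightarrow> trm" where
  "lifts k u \<equiv> ((\<lambda>s. lift s 0) ^^ k) u"

lemma lifts_Suc: "lifts (Suc k) u = lifts k (lift u 0)"
  by (simp only: funpow_Suc_right o_def)

lemma lift_lift: "i \<le> k \<Longrightarrow> lift (lift t i) (Suc k) = lift (lift t k) i"
  by (induct t arbitrary: i k) auto

lemma lift_subst_ge [simp]:
  "j \<le> i \<Longrightarrow> lift (subst t j s) i = subst (lift t (Suc i)) j (lift s i)"
  by (induct t arbitrary: i j s) (simp_all add: diff_Suc lift_lift split: nat.split)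

lemma lift_subst_le:
  "i \<le> j \<Longrightarrow> lift (subst t j s) i = subst (lift t i) (Suc j) (lift s i)"
  by (induct t arbitrary: i j s) (auto simp: lift_lift)

lemma subst_lift [simp]: "subst (lift t k) k s = t"
  by (induct t arbitrary: k s) simp_all

lemma subst_subst:
  "i \<le> j \<Longrightarrow> subst (subst t (Suc j) (lift v i)) i (subst u j v) = subst (subst t i u) j v"
  by (induct t arbitrary: i j u v)
    (simp_all add: diff_Suc lift_lift [symmetric] lift_subst_le split: nat.split)

lemma subst_lifts: "subst (lifts k u) (i + k) (lifts k s) = lifts k (subst u i s)"
  by (induct k) (simp_all add: lift_subst_le [of 0, symmetric])

primrec subst_lctx :: "lctx \<Rightarrow> nat \<Rightarrow> trm \<Rightarrow> lctx" where
  "subst_lctx Hole i s = Hole"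
| "subst_lctx (LApp t u D) i s = LApp (subst t i s) (subst u i s) (subst_lctx D (Suc i) (lift s 0))"

lemma depth_subst_lctx [simp]: "depth (subst_lctx D i s) = depth D"
  by (induct D arbitrary: i s) auto

lemma subst_plug:
  "subst (plug D t) i s = plug (subst_lctx D i s) (subst t (i + depth D) (lifts (depth D) s))"
  by (induct D arbitrary: i s) (simp_all add: lifts_Suc del: funpow.simps)

lemma dbeta_subst: "t \<rightarrow>\<^sub>d\<^sub>\<beta> t' \<Longrightarrow> subst t i s \<rightarrow>\<^sub>d\<^sub>\<beta> subst t' i s"
proof (induction arbitrary: i s rule: dbeta.induct)
  case (root D t u r)
  let ?k = "depth D"
  let ?t = "subst t (Suc (i + ?k)) (lift (lifts ?k s) 0)"
  let ?r = "subst r (Suc i) (lift s 0)"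
  have "JApp (plug (subst_lctx D i s) (Lam ?t)) (subst u i s) ?r \<rightarrow>\<^sub>d\<^sub>\<beta>
      subst ?r 0 (plug (subst_lctx D i s) (subst ?t 0 (lifts ?k (subst u i s))))"
    using dbeta.root[of "subst_lctx D i s"] by simp
  moreover have "subst ?t 0 (lifts ?k (subst u i s)) = subst (subst t 0 (lifts ?k u)) (i + ?k) (lifts ?k s)"
    using subst_subst[of 0 "i + ?k" t "lifts ?k s" "lifts ?k u"] by (simp add: subst_lifts)
  ultimately show ?case
    using subst_subst[of 0 i r s "plug D (subst t 0 (lifts ?k u))"] by (simp add: subst_plug)
qed (auto intro: dbeta.intros)

section \<open>Strong normalization as accessibility\<close>

abbreviation sn :: "trm set" where
  "sn \<equiv> Wellfounded.acc {(t', t). t \<rightarrow>\<^sub>d\<^sub>\<beta> t'}"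

lemma snI: "(\<And>t'. t \<rightarrow>\<^sub>d\<^sub>\<beta> t' \<Longrightarrow> t' \<in> sn) \<Longrightarrow> t \<in> sn"
  by (rule accI) blast

lemma sn_dbeta: "t \<in> sn \<Longrightarrow> t \<rightarrow>\<^sub>d\<^sub>\<beta> t' \<Longrightarrow> t' \<in> sn"
  by (erule acc_downward) simp

lemma sn_induct [consumes 1, case_names sn]:
  assumes "t \<in> sn" and "\<And>t. t \<in> sn \<Longrightarrow> (\<And>t'. t \<rightarrow>\<^sub>d\<^sub>\<beta> t' \<Longrightarrow> P t') \<Longrightarrow> P t"
  shows "P t"
  using assms by (induction rule: acc_induct_rule) (blast intro: accI)

lemma sn_imp_SN_dbeta: "t \<in> sn \<Longrightarrow> SN_dbeta t"
proof -
  assume "t \<in> sn"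
  then have "\<not> (\<forall>n. f n \<rightarrow>\<^sub>d\<^sub>\<beta> f (Suc n))" if "f 0 = t" for f
    using that
  proof (induction arbitrary: f rule: sn_induct)
    case (sn t)
    from sn.IH[of "f (Suc 0)" "\<lambda>n. f (Suc n)"] sn.prems show ?case by metis
  qed
  then show ?thesis unfolding SN_dbeta_def by blast
qed

lemma sn_preimage:
  assumes "f t \<in> sn" and "\<And>a b. a \<rightarrow>\<^sub>d\<^sub>\<beta> b \<Longrightarrow> f a \<rightarrow>\<^sub>d\<^sub>\<beta> f b"
  shows "t \<in> sn"
proof -
  have "s = f t \<Longrightarrow> t \<in> sn" if "s \<in> sn" for s
    using that by (induction arbitrary: t rule: sn_induct) (metis assms(2) snI)
  then show ?thesis using assms(1) by blast
qed

lemma sn_subst_Var: "subst t 0 (Var 0) \<in> sn \<Longrightarrow> t \<in> sn"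
  by (erule sn_preimage) (rule dbeta_subst)

lemma Var_dbeta [simp]: "\<not> Var x \<rightarrow>\<^sub>d\<^sub>\<beta> t"
  by (auto elim: dbeta.cases)

lemma Lam_dbetaE:
  assumes "Lam b \<rightarrow>\<^sub>d\<^sub>\<beta> t"
  obtains b' where "t = Lam b'" "b \<rightarrow>\<^sub>d\<^sub>\<beta> b'"
  using assms by (auto elim: dbeta.cases)

lemma sn_Lam: "b \<in> sn \<Longrightarrow> Lam b \<in> sn"
  by (induction rule: sn_induct) (metis Lam_dbetaE snI)

lemma plug_Lam_neq_Var [simp]: "plug D (Lam q) \<noteq> Var x" "Var x \<noteq> plug D (Lam q)"
  by (cases D; simp)+

lemma plug_Lam_eq_Lam [simp]:
  "plug D (Lam q) = Lam b \<longleftrightarrow> D = Hole \<and> q = b" "Lam b = plug D (Lam q) \<longleftrightarrow> D = Hole \<and> q = b"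
  by (cases D; auto)+

section \<open>Stacks of generalized applications\<close>

fun apps :: "trm \<Rightarrow> (trm \<times> trm) list \<Rightarrow> trm" where
  "apps t [] = t"
| "apps t ((u, r) # fs) = apps (JApp t u r) fs"

lemma apps_append [simp]: "apps t (fs @ gs) = apps (apps t fs) gs"
  by (induct fs arbitrary: t) auto

lemma apps_snoc_eq_plug_Lam:
  "apps t (fs @ [(u, r)]) = plug D (Lam q) \<longleftrightarrow> (\<exists>D'. D = LApp (apps t fs) u D' \<and> r = plug D' (Lam q))"
  by (cases D) auto

definition pair_step :: "((trm \<times> trm) \<times> trm \<times> trm) set" where
  "pair_step = {((u, r), (u', r')). u \<rightarrow>\<^sub>d\<^sub>\<beta> u' \<and> r' = r \<or> u' = u \<and> r \<rightarrow>\<^sub>d\<^sub>\<beta> r'}"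

lemma pair_stepI:
  "u \<rightarrow>\<^sub>d\<^sub>\<beta> u' \<Longrightarrow> ((u, r), (u', r)) \<in> pair_step"
  "r \<rightarrow>\<^sub>d\<^sub>\<beta> r' \<Longrightarrow> ((u, r), (u, r')) \<in> pair_step"
  by (simp_all add: pair_step_def)

lemma listrel1_preserves_all:
  assumes "(xs, ys) \<in> listrel1 r" "\<forall>x\<in>set xs. P x" "\<And>x y. (x, y) \<in> r \<Longrightarrow> P x \<Longrightarrow> P y"
  shows "\<forall>y\<in>set ys. P y"
  using assms by (auto elim!: listrel1E)

lemma apps_dbetaE:
  assumes "apps t fs \<rightarrow>\<^sub>d\<^sub>\<beta> M"
  obtains (head) t' where "t \<rightarrow>\<^sub>d\<^sub>\<beta> t'" "M = apps t' fs"
  | (stack) fs' where "(fs, fs') \<in> listrel1 pair_step" "M = apps t fs'"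
  | (redex) fs1 u r fs2 D q where "fs = fs1 @ (u, r) # fs2" "apps t fs1 = plug D (Lam q)"
      "M = apps (subst r 0 (plug D (subst q 0 (lifts (depth D) u)))) fs2"
  using assms
proof (induction fs arbitrary: M thesis rule: rev_induct)
  case Nil
  then show ?case by simp
next
  case (snoc p fs)
  obtain u r where p: "p = (u, r)" by fastforce
  from snoc.prems(4) have "JApp (apps t fs) u r \<rightarrow>\<^sub>d\<^sub>\<beta> M" by (simp add: p)
  then show ?case
  proof (cases rule: dbeta.cases)
    case (root D q)
    then show ?thesis using snoc.prems(3)[of fs u r "[]"] p by simp
  next
    case (app1 a')
    show ?thesis
    proof (rule snoc.IH[of a'])
      fix t' assume "t \<rightarrow>\<^sub>d\<^sub>\<beta> t'" "a' = apps t' fs"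
      then show ?thesis using app1(1) p snoc.prems(1)[of t'] by simp
    next
      fix fs' assume "(fs, fs') \<in> listrel1 pair_step" "a' = apps t fs'"
      then show ?thesis using app1(1) p snoc.prems(2)[of "fs' @ [p]"] by (simp add: append_listrel1I)
    next
      fix fs1 u' r' fs2 D q
      assume "fs = fs1 @ (u', r') # fs2" "apps t fs1 = plug D (Lam q)"
        "a' = apps (subst r' 0 (plug D (subst q 0 (lifts (depth D) u')))) fs2"
      then show ?thesis using app1(1) p snoc.prems(3)[of fs1 u' r' "fs2 @ [p]" D q] by simp
    qed (fact app1(2))
  next
    case (app2 u')
    then show ?thesis using snoc.prems(2)[of "fs @ [(u', r)]"] p by (simp add: append_listrel1I pair_stepI)
  next
    case (app3 r')
    then show ?thesis using snoc.prems(2)[of "fs @ [(u, r')]"] p by (simp add: append_listrel1I pair_stepI)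
  qed
qed

definition stack_terms :: "(trm \<times> trm) list \<Rightarrow> trm list" where
  "stack_terms fs = concat (map (\<lambda>(u, r). [u, r]) fs)"

lemma listrel1_stack_terms:
  assumes "(fs, fs') \<in> listrel1 pair_step"
  shows "(stack_terms fs', stack_terms fs) \<in> listrel1 {(t', t). t \<rightarrow>\<^sub>d\<^sub>\<beta> t'}"
  using assms
proof (rule listrel1E)
  fix p p' us vs assume "(p, p') \<in> pair_step" "fs = us @ p # vs" "fs' = us @ p' # vs"
  then show ?thesis
    by (auto simp: pair_step_def stack_terms_def intro!: append_listrel1I)
qed

lemma sn_stack_induct [consumes 2, case_names step]:
  assumes "t \<in> sn" and "\<forall>(u, r)\<in>set fs. u \<in> sn \<and> r \<in> sn"
    and step: "\<And>t fs. (\<And>t'. t \<rightarrow>\<^sub>d\<^sub>\<beta> t' \<Longrightarrow> P t' fs) \<Longrightarrow>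
      (\<And>fs'. (fs, fs') \<in> listrel1 pair_step \<Longrightarrow> P t fs') \<Longrightarrow> P t fs"
  shows "P t fs"
proof -
  have "t # stack_terms fs \<in> Wellfounded.acc (listrel1 {(t', t). t \<rightarrow>\<^sub>d\<^sub>\<beta> t'})"
    using assms(1,2) by (intro lists_accD) (auto simp: stack_terms_def)
  then show ?thesis
  proof (induction "t # stack_terms fs" arbitrary: t fs rule: acc_induct_rule)
    case 1
    show ?case
    proof (rule step)
      fix t' assume "t \<rightarrow>\<^sub>d\<^sub>\<beta> t'"
      then show "P t' fs" by (intro 1) auto
    next
      fix fs' assume "(fs, fs') \<in> listrel1 pair_step"
      then show "P t fs'" by (intro 1) (auto dest: listrel1_stack_terms)
    qed
  qed
qed

lemma sn_apps_Var:
  assumes "\<forall>(u, r)\<in>set fs. u \<in> sn \<and> r = Var 0"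
  shows "apps (Var x) fs \<in> sn"
proof -
  have sn_Var: "Var y \<in> sn" for y
    by (rule snI) simp
  have "t = Var x \<Longrightarrow> \<forall>(u, r)\<in>set fs. u \<in> sn \<and> r = Var 0 \<Longrightarrow> apps t fs \<in> sn"
    if "t \<in> sn" "\<forall>(u, r)\<in>set fs. u \<in> sn \<and> r \<in> sn" for t
    using that
  proof (induction t fs rule: sn_stack_induct)
    case (step t fs)
    show ?case
    proof (rule snI)
      fix M assume "apps t fs \<rightarrow>\<^sub>d\<^sub>\<beta> M"
      then show "M \<in> sn"
      proof (cases rule: apps_dbetaE)
        case (head t')
        then show ?thesis using step.prems by simp
      next
        case (stack fs')
        have "\<forall>(u, r)\<in>set fs'. u \<in> sn \<and> r = Var 0"
          by (rule listrel1_preserves_all[OF stack(1) step.prems(2)])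
            (auto simp: pair_step_def intro: sn_dbeta)
        then show ?thesis using step.IH(2)[OF stack(1)] step.prems(1) stack(2) by simp
      next
        case (redex fs1 u r fs2 D q)
        show ?thesis
        proof (cases fs1 rule: rev_exhaust)
          case Nil
          then show ?thesis using redex(2) step.prems(1) by simp
        next
          case (snoc fs0 p0)
          obtain u0 r0 where p0: "p0 = (u0, r0)" by fastforce
          with redex(2) snoc obtain D' where "r0 = plug D' (Lam q)"
            by (metis apps_snoc_eq_plug_Lam)
          then show ?thesis using step.prems(2) redex(1) snoc p0 by auto
        qed
      qed
    qed
  qed
  with assms sn_Var show ?thesis by fastforce
qed

section \<open>Reducibility\<close>

primrec Red :: "ty \<Rightarrow> trm set" where
  "Red (Atom n) = sn"
| "Red (Fun A B) = {t. \<forall>u\<in>Red A. JApp t u (Var 0) \<in> Red B}"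

lemma Red_dbeta: "t \<in> Red T \<Longrightarrow> t \<rightarrow>\<^sub>d\<^sub>\<beta> t' \<Longrightarrow> t' \<in> Red T"
  by (induction T arbitrary: t t') (fastforce intro: sn_dbeta dbeta.app1)+

lemma Red_sn_and_neutral:
  "Red T \<subseteq> sn \<and> (\<forall>x fs. (\<forall>(u, r)\<in>set fs. u \<in> sn \<and> r = Var 0) \<longrightarrow> apps (Var x) fs \<in> Red T)"
proof (induction T)
  case (Atom n)
  then show ?case by (simp add: sn_apps_Var)
next
  case (Fun A B)
  have "Var 0 \<in> Red A"
    using Fun.IH(1)[THEN conjunct2, rule_format, of "[]" 0] by simp
  have "t \<in> sn" if "t \<in> Red (Fun A B)" for t
  proof (rule sn_preimage)
    show "JApp t (Var 0) (Var 0) \<in> sn" using that \<open>Var 0 \<in> Red A\<close> Fun.IH(2) by auto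
  qed (rule dbeta.app1)
  moreover have "JApp (apps (Var x) fs) u (Var 0) \<in> Red B"
    if "\<forall>(u, r)\<in>set fs. u \<in> sn \<and> r = Var 0" "u \<in> Red A" for x fs u
  proof -
    have "\<forall>(u', r)\<in>set (fs @ [(u, Var 0)]). u' \<in> sn \<and> r = Var 0"
      using that Fun.IH(1) by auto
    with Fun.IH(2) have "apps (Var x) (fs @ [(u, Var 0)]) \<in> Red B" by blast
    then show ?thesis by simp
  qed
  ultimately show ?case by auto
qed

lemma Red_sn: "t \<in> Red T \<Longrightarrow> t \<in> sn"
  using Red_sn_and_neutral by blast

lemma Var_in_Red [simp]: "Var x \<in> Red T"
  using Red_sn_and_neutral[of T, THEN conjunct2, rule_format, of "[]" x] by simp

definition red_cont :: "ty \<Rightarrow> trm \<Rightarrow> ty \<Rightarrow> bool" where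
  "red_cont B r C \<longleftrightarrow> (\<forall>s\<in>Red B. subst r 0 s \<in> Red C)"

lemma red_cont_sn: "red_cont B r C \<Longrightarrow> r \<in> sn"
  unfolding red_cont_def by (metis Var_in_Red Red_sn sn_subst_Var)

lemma red_cont_dbeta: "red_cont B r C \<Longrightarrow> r \<rightarrow>\<^sub>d\<^sub>\<beta> r' \<Longrightarrow> red_cont B r' C"
  unfolding red_cont_def by (metis Red_dbeta dbeta_subst)

inductive red_stack :: "ty \<Rightarrow> (trm \<times> trm) list \<Rightarrow> ty list \<Rightarrow> ty \<Rightarrow> bool" where
  Nil: "red_stack T [] [] T"
| Cons: "u \<in> Red A \<Longrightarrow> red_cont B r C \<Longrightarrow> red_stack C fs Ts E \<Longrightarrow>
    red_stack (Fun A B) ((u, r) # fs) (Fun A B # Ts) E"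

inductive_simps red_stack_Nil_iff: "red_stack T [] Ts E"
inductive_simps red_stack_Cons_iff: "red_stack T ((u, r) # fs) Ts E"

lemma red_stack_append_iff:
  "red_stack T (fs @ gs) Ts E \<longleftrightarrow>
    (\<exists>Ts1 Ts2 C. Ts = Ts1 @ Ts2 \<and> red_stack T fs Ts1 C \<and> red_stack C gs Ts2 E)"
proof (induction fs arbitrary: T Ts)
  case Nil
  then show ?case by (simp add: red_stack_Nil_iff)
next
  case (Cons p fs)
  obtain u r where p: "p = (u, r)" by fastforce
  show ?case
    unfolding p append_Cons red_stack_Cons_iff Cons.IH by (metis append_Cons)
qed

lemma red_stack_sn: "red_stack T fs Ts E \<Longrightarrow> \<forall>(u, r)\<in>set fs. u \<in> sn \<and> r \<in> sn"
  by (induction rule: red_stack.induct) (auto intro: Red_sn red_cont_sn)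

lemma red_stack_pair_step:
  "red_stack T fs Ts E \<Longrightarrow> (fs, fs') \<in> listrel1 pair_step \<Longrightarrow> red_stack T fs' Ts E"
proof (induction arbitrary: fs' rule: red_stack.induct)
  case (Cons u A B r C fs Ts E)
  from Cons.prems consider
      (head) p' where "fs' = p' # fs" "((u, r), p') \<in> pair_step"
    | (tail) fs'' where "fs' = (u, r) # fs''" "(fs, fs'') \<in> listrel1 pair_step"
    by blast
  then show ?case
  proof cases
    case head
    then show ?thesis using Cons.hyps
      by (auto simp: pair_step_def intro: red_stack.Cons Red_dbeta red_cont_dbeta)
  next
    case tail
    then show ?thesis using Cons.hyps Cons.IH by (blast intro: red_stack.Cons)
  qed
qed simp

inductive id_stack :: "ty \<Rightarrow> (trm \<times> trm) list \<Rightarrow> ty list \<Rightarrow> bool" where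
  Nil: "id_stack (Atom n) [] []"
| Cons: "u \<in> Red A \<Longrightarrow> id_stack B fs Ts \<Longrightarrow> id_stack (Fun A B) ((u, Var 0) # fs) (Fun A B # Ts)"

inductive_simps id_stack_Atom_iff: "id_stack (Atom n) fs Ts"
inductive_simps id_stack_Fun_iff: "id_stack (Fun A B) fs Ts"

lemma id_stack_red_stack: "id_stack T fs Ts \<Longrightarrow> \<exists>n. red_stack T fs Ts (Atom n)"
proof (induction rule: id_stack.induct)
  case (Cons u A B fs Ts)
  then obtain n where "red_stack B fs Ts (Atom n)" by blast
  moreover have "red_cont B (Var 0) B" by (simp add: red_cont_def)
  ultimately show ?case using Cons.hyps(1) by (blast intro: red_stack.Cons)
qed (blast intro: red_stack.Nil)

lemma id_stack_size: "id_stack T fs Ts \<Longrightarrow> \<forall>X\<in>set Ts. size X \<le> size T"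
  by (induction rule: id_stack.induct) fastforce+

lemma Red_iff_id_stacks: "t \<in> Red T \<longleftrightarrow> (\<forall>fs Ts. id_stack T fs Ts \<longrightarrow> apps t fs \<in> sn)"
proof (induction T arbitrary: t)
  case (Atom n)
  then show ?case by (simp add: id_stack_Atom_iff)
next
  case (Fun A B)
  have "t \<in> Red (Fun A B) \<longleftrightarrow>
      (\<forall>u\<in>Red A. \<forall>fs Ts. id_stack B fs Ts \<longrightarrow> apps t ((u, Var 0) # fs) \<in> sn)"
    using Fun.IH(2) by simp
  also have "\<dots> \<longleftrightarrow> (\<forall>fs Ts. id_stack (Fun A B) fs Ts \<longrightarrow> apps t fs \<in> sn)"
    by (metis id_stack.Cons id_stack_Fun_iff)
  finally show ?case .
qed

section \<open>The stack lemma\<close>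

(* Abstractions need separate treatment because Lam_in_Red is only derived from the stack lemma. *)
definition Red_or_Lam :: "ty \<Rightarrow> trm \<Rightarrow> bool" where
  "Red_or_Lam T t \<longleftrightarrow> t \<in> Red T \<or> (\<exists>A B b. T = Fun A B \<and> t = Lam b \<and> red_cont A b B)"

lemma Red_or_Lam_sn: "Red_or_Lam T t \<Longrightarrow> t \<in> sn"
  unfolding Red_or_Lam_def by (auto intro: Red_sn sn_Lam red_cont_sn)

lemma Red_or_Lam_dbeta: "Red_or_Lam T t \<Longrightarrow> t \<rightarrow>\<^sub>d\<^sub>\<beta> t' \<Longrightarrow> Red_or_Lam T t'"
  unfolding Red_or_Lam_def by (metis Lam_dbetaE Red_dbeta red_cont_dbeta)

definition stacks_sn :: "ty list \<Rightarrow> bool" where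
  "stacks_sn Ts \<longleftrightarrow>
    (\<forall>T fs t n. red_stack T fs Ts (Atom n) \<longrightarrow> Red_or_Lam T t \<longrightarrow> apps t fs \<in> sn)"

lemma stacks_snD: "stacks_sn Ts \<Longrightarrow> red_stack T fs Ts (Atom n) \<Longrightarrow> Red_or_Lam T t \<Longrightarrow> apps t fs \<in> sn"
  unfolding stacks_sn_def by blast

lemma Red_apps_if_stacks_sn:
  assumes "\<And>Ts'. \<forall>X\<in>set Ts'. size X \<le> size B \<Longrightarrow> stacks_sn (Ts @ Ts')"
    and "red_stack T fs Ts B" and "Red_or_Lam T t"
  shows "apps t fs \<in> Red B"
  unfolding Red_iff_id_stacks
proof (intro allI impI)
  fix fs' Ts' assume id: "id_stack B fs' Ts'"
  then obtain n where "red_stack B fs' Ts' (Atom n)" using id_stack_red_stack by blast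
  with assms(2) have "red_stack T (fs @ fs') (Ts @ Ts') (Atom n)"
    by (auto simp: red_stack_append_iff)
  with assms(1)[OF id_stack_size[OF id]] have "apps t (fs @ fs') \<in> sn"
    using assms(3) by (rule stacks_snD)
  then show "apps (apps t fs) fs' \<in> sn" by simp
qed

lemma red_cont_contractum:
  assumes "red_cont B' (plug D (Lam q)) (Fun A B)" and "u \<in> Red A"
  shows "red_cont B' (plug D (subst q 0 (lifts (depth D) (lift u 0)))) B"
  unfolding red_cont_def
proof
  fix s assume "s \<in> Red B'"
  with assms have red: "JApp (subst (plug D (Lam q)) 0 s) u (Var 0) \<in> Red B"
    by (simp add: red_cont_def)
  have "JApp (plug D (Lam q)) (lift u 0) (Var 0) \<rightarrow>\<^sub>d\<^sub>\<beta> plug D (subst q 0 (lifts (depth D) (lift u 0)))"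
    using dbeta.root[of D q "lift u 0" "Var 0"] by simp
  from dbeta_subst[OF this, of 0 s] have "JApp (subst (plug D (Lam q)) 0 s) u (Var 0) \<rightarrow>\<^sub>d\<^sub>\<beta>
      subst (plug D (subst q 0 (lifts (depth D) (lift u 0)))) 0 s"
    by simp
  with red show "subst (plug D (subst q 0 (lifts (depth D) (lift u 0)))) 0 s \<in> Red B"
    by (rule Red_dbeta)
qed

lemma Red_contractum:
  assumes IH: "\<And>Ts'. \<forall>X\<in>set Ts'. size X \<le> size B \<Longrightarrow> stacks_sn (Ts @ Ts')"
    and stack: "red_stack T fs Ts (Fun A B)" and t: "Red_or_Lam T t" and u: "u \<in> Red A"
    and redex: "apps t fs = plug D (Lam q)"
  shows "plug D (subst q 0 (lifts (depth D) u)) \<in> Red B"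
proof (cases fs rule: rev_exhaust)
  case Nil
  with stack redex have T: "T = Fun A B" and "t = plug D (Lam q)"
    by (simp_all add: red_stack_Nil_iff)
  from t show ?thesis
    unfolding Red_or_Lam_def
  proof (elim disjE exE conjE)
    assume "t \<in> Red T"
    with T u have "JApp t u (Var 0) \<in> Red B" by simp
    moreover have "JApp t u (Var 0) \<rightarrow>\<^sub>d\<^sub>\<beta> plug D (subst q 0 (lifts (depth D) u))"
      using dbeta.root[of D q u "Var 0"] \<open>t = plug D (Lam q)\<close> by simp
    ultimately show ?thesis by (rule Red_dbeta)
  next
    fix A' B' b assume "T = Fun A' B'" "t = Lam b" "red_cont A' b B'"
    with T u \<open>t = plug D (Lam q)\<close> show ?thesis by (simp add: red_cont_def)
  qed
next
  case (snoc fs0 p0)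
  obtain u0 r0 where p0: "p0 = (u0, r0)" by fastforce
  with redex snoc obtain D0 where D: "D = LApp (apps t fs0) u0 D0" and r0: "r0 = plug D0 (Lam q)"
    by (metis apps_snoc_eq_plug_Lam)
  from stack snoc p0 obtain Ts0 A0 B0 where Ts: "Ts = Ts0 @ [Fun A0 B0]"
    and stack0: "red_stack T fs0 Ts0 (Fun A0 B0)" and u0: "u0 \<in> Red A0"
    and r0_cont: "red_cont B0 r0 (Fun A B)"
    by (auto simp: red_stack_append_iff red_stack_Cons_iff red_stack_Nil_iff)
  define r' where "r' = plug D0 (subst q 0 (lifts (depth D0) (lift u 0)))"
  have "red_cont B0 r' B"
    unfolding r'_def using red_cont_contractum r0_cont u r0 by blast
  with stack0 u0 have "red_stack T (fs0 @ [(u0, r')]) Ts B"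
    by (auto simp: Ts red_stack_append_iff intro!: red_stack.intros)
  then have "apps t (fs0 @ [(u0, r')]) \<in> Red B"
    using Red_apps_if_stacks_sn[OF IH _ t] by blast
  then show ?thesis by (simp add: D r'_def lifts_Suc del: funpow.simps)
qed

lemma less_add_mset_if_all_less:
  fixes x :: "'a :: linorder"
  assumes "\<forall>k\<in>#K. k < x"
  shows "K < add_mset x N"
proof -
  have "K < {#x#}" using assms by simp
  also have "{#x#} \<le> add_mset x N" by (simp add: subset_eq_imp_le_multiset)
  finally show ?thesis .
qed

lemma sn_stack_contractum:
  assumes IH: "\<And>Ts'. mset (map size Ts') < mset (map size Ts) \<Longrightarrow> stacks_sn Ts'"
    and stack: "red_stack T (fs1 @ (u, r) # fs2) Ts (Atom n)" and t: "Red_or_Lam T t"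
    and redex: "apps t fs1 = plug D (Lam q)"
  shows "apps (subst r 0 (plug D (subst q 0 (lifts (depth D) u)))) fs2 \<in> sn"
proof -
  from stack obtain Ts1 A B C Ts2 where
    Ts: "Ts = Ts1 @ Fun A B # Ts2" and stack1: "red_stack T fs1 Ts1 (Fun A B)"
    and u: "u \<in> Red A" and r: "red_cont B r C" and stack2: "red_stack C fs2 Ts2 (Atom n)"
    by (auto simp: red_stack_append_iff red_stack_Cons_iff)
  have "stacks_sn (Ts1 @ Ts')" if "\<forall>X\<in>set Ts'. size X \<le> size B" for Ts'
    using that by (intro IH) (simp add: Ts, rule less_add_mset_if_all_less, fastforce)
  then have "plug D (subst q 0 (lifts (depth D) u)) \<in> Red B"
    using stack1 t u redex by (rule Red_contractum)
  with r have "Red_or_Lam C (subst r 0 (plug D (subst q 0 (lifts (depth D) u))))"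
    by (simp add: red_cont_def Red_or_Lam_def)
  moreover have "stacks_sn Ts2"
    by (intro IH) (auto simp: Ts intro: less_add_mset_if_all_less)
  ultimately show ?thesis
    using stack2 by (simp add: stacks_snD)
qed

lemma stacks_sn: "stacks_sn Ts"
proof (induction "mset (map size Ts)" arbitrary: Ts rule: less_induct)
  case less
  show ?case
    unfolding stacks_sn_def
  proof (intro allI impI)
    fix T fs t n assume stack: "red_stack T fs Ts (Atom n)" and t: "Red_or_Lam T t"
    from t stack have "t \<in> sn" "\<forall>(u, r)\<in>set fs. u \<in> sn \<and> r \<in> sn"
      by (simp_all add: Red_or_Lam_sn red_stack_sn)
    then show "apps t fs \<in> sn"
      using stack t
    proof (induction t fs rule: sn_stack_induct)
      case (step t fs)
      show ?case
      proof (rule snI)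
        fix M assume "apps t fs \<rightarrow>\<^sub>d\<^sub>\<beta> M"
        then show "M \<in> sn"
        proof (cases rule: apps_dbetaE)
          case (head t')
          then show ?thesis using step Red_or_Lam_dbeta by simp
        next
          case (stack fs')
          then show ?thesis using step red_stack_pair_step by simp
        next
          case (redex fs1 u r fs2 D q)
          with step.prems show ?thesis by (metis less sn_stack_contractum)
        qed
      qed
    qed
  qed
qed

lemma Red_apps:
  assumes "red_stack T fs Ts B" and "Red_or_Lam T t"
  shows "apps t fs \<in> Red B"
  using stacks_sn assms by (rule Red_apps_if_stacks_sn)

lemma JApp_in_Red:
  assumes "t \<in> Red (Fun A B)" and "u \<in> Red A" and "red_cont B r C"
  shows "JApp t u r \<in> Red C"
proof -
  have "red_stack (Fun A B) [(u, r)] [Fun A B] C"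
    using assms(2,3) by (auto intro: red_stack.intros)
  moreover have "Red_or_Lam (Fun A B) t" using assms(1) by (simp add: Red_or_Lam_def)
  ultimately show ?thesis using Red_apps by fastforce
qed

lemma Lam_in_Red: "red_cont A b B \<Longrightarrow> Lam b \<in> Red (Fun A B)"
  using Red_apps[OF red_stack.Nil, of "Fun A B" "Lam b"] by (simp add: Red_or_Lam_def)

section \<open>Parallel substitution and the fundamental lemma\<close>

definition up :: "(nat \<Rightarrow> trm) \<Rightarrow> nat \<Rightarrow> trm" where
  "up \<sigma> = case_nat (Var 0) (\<lambda>i. lift (\<sigma> i) 0)"

primrec psubst :: "(nat \<Rightarrow> trm) \<Rightarrow> trm \<Rightarrow> trm" where
  "psubst \<sigma> (Var i) = \<sigma> i"
| "psubst \<sigma> (Lam t) = Lam (psubst (up \<sigma>) t)"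
| "psubst \<sigma> (JApp t u r) = JApp (psubst \<sigma> t) (psubst \<sigma> u) (psubst (up \<sigma>) r)"

lemma psubst_Var: "psubst Var t = t"
proof -
  have "up Var = Var" by (simp add: up_def fun_eq_iff split: nat.split)
  then show ?thesis by (induct t) simp_all
qed

lemma subst_up: "(\<lambda>i. subst (up \<sigma> i) (Suc k) (lift u 0)) = up (\<lambda>i. subst (\<sigma> i) k u)"
  by (simp add: up_def fun_eq_iff lift_subst_le split: nat.split)

lemma subst_psubst: "subst (psubst \<sigma> t) k u = psubst (\<lambda>i. subst (\<sigma> i) k u) t"
  by (induct t arbitrary: \<sigma> k u) (simp_all add: subst_up)

lemma subst_psubst_up: "subst (psubst (up \<sigma>) t) 0 u = psubst (case_nat u \<sigma>) t"
proof -
  have "(\<lambda>i. subst (up \<sigma> i) 0 u) = case_nat u \<sigma>"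
    by (simp add: up_def fun_eq_iff split: nat.split)
  then show ?thesis by (simp add: subst_psubst)
qed

lemma red_cont_psubst_up:
  assumes "\<And>s. s \<in> Red B \<Longrightarrow> psubst (case_nat s \<sigma>) r \<in> Red C"
  shows "red_cont B (psubst (up \<sigma>) r) C"
  using assms by (simp add: red_cont_def subst_psubst_up)

lemma shift_env_eq_case_nat: "shift_env \<Gamma> A = case_nat A \<Gamma>"
  by (simp add: shift_env_def fun_eq_iff split: nat.split)

lemma typing_psubst_Red:
  "typing \<Gamma> t T \<Longrightarrow> (\<And>i. \<sigma> i \<in> Red (\<Gamma> i)) \<Longrightarrow> psubst \<sigma> t \<in> Red T"
proof (induction arbitrary: \<sigma> rule: typing.induct)
  case (tvar \<Gamma> x A)
  then show ?case by auto
next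
  case (tlam \<Gamma> A t B)
  have "red_cont A (psubst (up \<sigma>) t) B"
    using tlam by (intro red_cont_psubst_up tlam.IH) (simp add: shift_env_eq_case_nat split: nat.split)
  then show ?case by (simp add: Lam_in_Red del: Red.simps)
next
  case (tapp \<Gamma> t A B u r C)
  have "red_cont B (psubst (up \<sigma>) r) C"
    using tapp by (intro red_cont_psubst_up tapp.IH(3)) (simp add: shift_env_eq_case_nat split: nat.split)
  moreover have "psubst \<sigma> t \<in> Red (Fun A B)" and "psubst \<sigma> u \<in> Red A"
    using tapp.IH(1,2) tapp.prems by (simp_all del: Red.simps)
  ultimately show ?case by (simp add: JApp_in_Red del: Red.simps)
qed

theorem mainTheorem1:
  assumes "typing \<Gamma> t A"
  shows "SN_dbeta t"
proof -
  have "psubst Var t \<in> Red A"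
    using assms by (rule typing_psubst_Red) simp
  then show ?thesis
    by (simp add: psubst_Var Red_sn sn_imp_SN_dbeta)
qed

end
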